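(* Let $h\in\mathbb R[x_1,\ldots,x_n]$ be homogeneous and hyperbolic in direction $e\in\mathbb R^n$, and let $\mathcal A_e(h)$, $\sigma=(\sigma_1,\ldots,\sigma_n)$ and $\Sigma^2\mathcal A_e(h)$ be as in the context. Then: (i) If $a\in\mathbb R^n$ satisfies $h(a)\neq 0$, then $a\bullet\sigma=a_1\sigma_1+\cdots+a_n\sigma_n$ is invertible in $\mathcal A_e(h)$. (ii) If $a\in\mathring{\Lambda}_e(h)$, then $a\bullet\sigma\in\Sigma^2\mathcal A_e(h)$. (iii) $1$ is an algebraic interior point of $\Sigma^2\mathcal A_e(h)$, i.e. for every hermitian element $b=b^*\in\mathcal A_e(h)$ there is $\varepsilon>0$ with $1+tb\in\Sigma^2\mathcal A_e(h)$ for all $t\in[-\varepsilon,\varepsilon]$.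
   Context: A homogeneous polynomial $h\in\mathbb R[x]=\mathbb R[x_1,\ldots,x_n]$ is hyperbolic in direction $e\in\mathbb R^n$ if $h(e)\neq0$ and for every $a\in\mathbb R^n$ the univariate polynomial $h_{a,e}(t):=h(a-te)$ has only real roots. The hyperbolicity cone is $\Lambda_e(h)=\{a\in\mathbb R^n: h_{a,e}(t)\text{ has only nonnegative roots}\}$, with interior $\mathring\Lambda_e(h)=\{a: h_{a,e}(t)\text{ has only positive roots}\}$. For $a\in\mathbb R^n$ and a tuple $z=(z_1,\dots,z_n)$ write $a\bullet z=a_1z_1+\cdots+a_nz_n$. Let $\mathbb C\langle z\rangle=\mathbb C\langle z_1,\ldots,z_n\rangle$ be the free noncommutative unital algebra with the involution $*$ (conjugate-linear, anti-multiplicative) determined by $z_i^*=z_i$. Let $J_e(h)$ be the two-sided ideal generated by all elements $h_{a,e}(a\bullet z)$, $a\in\mathbb R^n$, together with $1-e\bullet z$. The generalized Clifford algebra is the unital $*$-algebra $\mathcal A_e(h)=\mathbb C\langle z\rangle/J_e(h)$; $\sigma_i$ denotes the class of $z_i$. $\Sigma^2\mathcal A_e(h)$ denotes the convex cone of finite sums $\sum_i a_i^*a_i$ with $a_i\in\mathcal A_e(h)$. *)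

theory Defs
  imports Main "HOL-Library.Poly_Mapping" "HOL-Library.Function_Algebras"
    "HOL-Computational_Algebra.Polynomial"
begin

type_synonym 'n mpoly = "('n \<Rightarrow>\<^sub>0 nat) \<Rightarrow>\<^sub>0 real"

definition mpoly_eval :: "('n::finite) mpoly \<Rightarrow> ('n \<Rightarrow> real) \<Rightarrow> real" where
  "mpoly_eval h x = (\<Sum>\<alpha>::('n \<Rightarrow>\<^sub>0 nat)\<in>Poly_Mapping.keys h. Poly_Mapping.lookup h \<alpha> * (\<Prod>i::'n\<in>UNIV. x i ^ Poly_Mapping.lookup \<alpha> i))"

definition homogeneous :: "('n::finite) mpoly \<Rightarrow> bool" where
  "homogeneous h \<longleftrightarrow> (\<exists>d::nat. \<forall>\<alpha>::('n \<Rightarrow>\<^sub>0 nat)\<in>Poly_Mapping.keys h. (\<Sum>i::'n\<in>UNIV. Poly_Mapping.lookup \<alpha> i) = d)"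

text \<open>The univariate polynomial h_{a,e}(t) = h(a - t e).\<close>
definition hline :: "('n::finite) mpoly \<Rightarrow> ('n \<Rightarrow> real) \<Rightarrow> ('n \<Rightarrow> real) \<Rightarrow> real poly" where
  "hline h a e = (\<Sum>\<alpha>::('n \<Rightarrow>\<^sub>0 nat)\<in>Poly_Mapping.keys h. smult (Poly_Mapping.lookup h \<alpha>) (\<Prod>i::'n\<in>UNIV. [:a i, - e i:] ^ Poly_Mapping.lookup \<alpha> i))"

definition hyperbolic :: "('n::finite) mpoly \<Rightarrow> ('n \<Rightarrow> real) \<Rightarrow> bool" where
  "hyperbolic h e \<longleftrightarrow> mpoly_eval h e \<noteq> 0 \<and>
     (\<forall>a. \<forall>z. poly (map_poly complex_of_real (hline h a e)) z = 0 \<longrightarrow> z \<in> \<real>)"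

definition hcone_interior :: "('n::finite) mpoly \<Rightarrow> ('n \<Rightarrow> real) \<Rightarrow> ('n \<Rightarrow> real) set" where
  "hcone_interior h e = {a. \<forall>z. poly (map_poly complex_of_real (hline h a e)) z = 0 \<longrightarrow>
                                 z \<in> \<real> \<and> 0 < Re z}"

text \<open>Elements are finitely supported maps from words ('n list) to complex coefficients;
  addition, subtraction, zero are pointwise (Function_Algebras).\<close>

type_synonym 'n ncpoly = "'n list \<Rightarrow> complex"

definition fsupp :: "'n ncpoly \<Rightarrow> bool" where
  "fsupp p \<longleftrightarrow> finite {w. p w \<noteq> 0}"

definition nc_one :: "'n ncpoly" where
  "nc_one w = (if w = [] then 1 else 0)"

definition nc_var :: "'n \<Rightarrow> 'n ncpoly" where
  "nc_var i w = (if w = [i] then 1 else 0)"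

definition nc_scale :: "complex \<Rightarrow> 'n ncpoly \<Rightarrow> 'n ncpoly" where
  "nc_scale c p = (\<lambda>w. c * p w)"

definition nc_mult :: "'n ncpoly \<Rightarrow> 'n ncpoly \<Rightarrow> 'n ncpoly" where
  "nc_mult p q w = (\<Sum>k\<le>length w. p (take k w) * q (drop k w))"

text \<open>The involution: conjugate-linear, anti-multiplicative, z_i^* = z_i.\<close>
definition nc_star :: "'n ncpoly \<Rightarrow> 'n ncpoly" where
  "nc_star p w = cnj (p (rev w))"

fun nc_pow :: "'n ncpoly \<Rightarrow> nat \<Rightarrow> 'n ncpoly" where
  "nc_pow X 0 = nc_one"
| "nc_pow X (Suc k) = nc_mult X (nc_pow X k)"

definition nc_polyeval :: "real poly \<Rightarrow> 'n ncpoly \<Rightarrow> 'n ncpoly" where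
  "nc_polyeval p X = (\<Sum>k\<le>degree p. nc_scale (complex_of_real (coeff p k)) (nc_pow X k))"

definition nc_lin :: "('n::finite \<Rightarrow> real) \<Rightarrow> 'n ncpoly" where
  "nc_lin a = (\<Sum>i\<in>UNIV. nc_scale (complex_of_real (a i)) (nc_var i))"

inductive_set nc_ideal :: "'n ncpoly set \<Rightarrow> 'n ncpoly set" for G where
  gen: "g \<in> G \<Longrightarrow> g \<in> nc_ideal G"
| zero: "0 \<in> nc_ideal G"
| add: "p \<in> nc_ideal G \<Longrightarrow> q \<in> nc_ideal G \<Longrightarrow> p + q \<in> nc_ideal G"
| lmult: "fsupp r \<Longrightarrow> p \<in> nc_ideal G \<Longrightarrow> nc_mult r p \<in> nc_ideal G"
| rmult: "fsupp r \<Longrightarrow> p \<in> nc_ideal G \<Longrightarrow> nc_mult p r \<in> nc_ideal G"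

definition Jideal :: "('n::finite) mpoly \<Rightarrow> ('n \<Rightarrow> real) \<Rightarrow> 'n ncpoly set" where
  "Jideal h e = nc_ideal ({nc_polyeval (hline h a e) (nc_lin a) | a. True} \<union> {nc_one - nc_lin e})"

section \<open>Notions in the quotient A_e(h) = C<z>/J, expressed on representatives\<close>

definition invertible_mod :: "'n ncpoly set \<Rightarrow> 'n ncpoly \<Rightarrow> bool" where
  "invertible_mod J x \<longleftrightarrow> (\<exists>y. fsupp y \<and> nc_mult y x - nc_one \<in> J \<and> nc_mult x y - nc_one \<in> J)"

definition sos_mod :: "'n ncpoly set \<Rightarrow> 'n ncpoly \<Rightarrow> bool" where
  "sos_mod J x \<longleftrightarrow> (\<exists>qs. (\<forall>q\<in>set qs. fsupp q) \<and>
       x - sum_list (map (\<lambda>q. nc_mult (nc_star q) q) qs) \<in> J)"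

definition hermitian_mod :: "'n ncpoly set \<Rightarrow> 'n ncpoly \<Rightarrow> bool" where
  "hermitian_mod J b \<longleftrightarrow> nc_star b - b \<in> J"

end

theory Submission
  imports Defs "HOL-Computational_Algebra.Fundamental_Theorem_Algebra"
begin

text \<open>
  (i) The constant term of \<open>h\<^sub>a\<^sub>,\<^sub>e(t)\<close> is \<open>h(a)\<close>, so \<open>h\<^sub>a\<^sub>,\<^sub>e(X) = h(a) + X p(X) \<in> J\<close> for
  \<open>X = a \<bullet> z\<close>, and \<open>-p(X)/h(a)\<close> inverts \<open>X\<close> modulo \<open>J\<close>.

  (ii) If all roots of \<open>q = h\<^sub>a\<^sub>,\<^sub>e\<close> are real and positive, then \<open>t\<close> is a square modulo \<open>q\<close>
  in \<open>\<real>[t]\<close>: peeling off one root \<open>\<lambda>\<close> at a time, a square root \<open>s'\<close> of \<open>t\<close> modulo \<open>q'\<close> lifts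
  to one modulo \<open>(t - \<lambda>) q'\<close> of the form \<open>s' + v q'\<close>, where \<open>\<lambda> > 0\<close> makes the quadratic
  equation for \<open>v\<close> solvable.  Evaluating \<open>t - s(t)\<^sup>2 = q(t) r(t)\<close> at the hermitian element
  \<open>X\<close> gives \<open>X \<equiv> s(X)\<^sup>* s(X)\<close>.

  (iii) By homogeneity and continuity, \<open>e \<plusminus> \<epsilon> \<delta>\<^sub>i\<close> lies in the open cone for small \<open>\<epsilon>\<close>, so
  by (ii) and \<open>e \<bullet> z \<equiv> 1\<close> both \<open>1 \<plusminus> \<epsilon> z\<^sub>i\<close> are sums of squares.  The identity
  \<open>(1 - x)(1 + x)(1 - x) + (1 + x)(1 - x)(1 + x) = 2 (1 - x\<^sup>2)\<close> then bounds \<open>z\<^sub>i\<^sup>2\<close> by a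
  constant.  Bounded elements form a \<open>*\<close>-closed subalgebra, so every hermitian element is
  squeezed between \<open>-N\<close> and \<open>N\<close>, which makes \<open>1\<close> an algebraic interior point.
\<close>

section \<open>The free \<open>*\<close>-algebra\<close>

lemma sum_fun_apply: "(\<Sum>a\<in>A. f a) x = (\<Sum>a\<in>A. f a x)"
  by (induction A rule: infinite_finite_induct) auto

lemma nc_mult_zero_left [simp]: "nc_mult 0 r = 0"
  by (rule ext) (simp add: nc_mult_def)

lemma nc_mult_zero_right [simp]: "nc_mult r 0 = 0"
  by (rule ext) (simp add: nc_mult_def)

lemma nc_mult_add_left: "nc_mult (p + q) r = nc_mult p r + nc_mult q r"
  by (rule ext) (simp add: nc_mult_def algebra_simps sum.distrib)

lemma nc_mult_add_right: "nc_mult r (p + q) = nc_mult r p + nc_mult r q"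
  by (rule ext) (simp add: nc_mult_def algebra_simps sum.distrib)

lemma nc_mult_diff_left: "nc_mult (p - q) r = nc_mult p r - nc_mult q r"
  by (rule ext) (simp add: nc_mult_def algebra_simps sum_subtractf)

lemma nc_mult_diff_right: "nc_mult r (p - q) = nc_mult r p - nc_mult r q"
  by (rule ext) (simp add: nc_mult_def algebra_simps sum_subtractf)

lemma nc_mult_scale_left: "nc_mult (nc_scale c p) r = nc_scale c (nc_mult p r)"
  by (rule ext) (simp add: nc_mult_def nc_scale_def sum_distrib_left algebra_simps)

lemma nc_mult_scale_right: "nc_mult r (nc_scale c p) = nc_scale c (nc_mult r p)"
  by (rule ext) (simp add: nc_mult_def nc_scale_def sum_distrib_left algebra_simps)

lemma nc_mult_sum_right: "nc_mult r (\<Sum>a\<in>A. f a) = (\<Sum>a\<in>A. nc_mult r (f a))"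
  by (rule ext) (simp add: nc_mult_def sum_fun_apply sum_distrib_left sum.swap[of _ A])

lemma nc_mult_sum_list_left: "nc_mult (sum_list xs) r = sum_list (map (\<lambda>a. nc_mult a r) xs)"
  by (induction xs) (simp_all only: list.map sum_list.Nil sum_list.Cons nc_mult_zero_left nc_mult_add_left)

lemma nc_mult_sum_list_right: "nc_mult r (sum_list xs) = sum_list (map (nc_mult r) xs)"
  by (induction xs) (simp_all only: list.map sum_list.Nil sum_list.Cons nc_mult_zero_right nc_mult_add_right)

lemma nc_scale_add: "nc_scale c (p + q) = nc_scale c p + nc_scale c q"
  by (rule ext) (simp add: nc_scale_def algebra_simps)

lemma nc_scale_diff: "nc_scale c (p - q) = nc_scale c p - nc_scale c q"
  by (rule ext) (simp add: nc_scale_def algebra_simps)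

lemma nc_scale_add_left: "nc_scale (c + d) p = nc_scale c p + nc_scale d p"
  by (rule ext) (simp add: nc_scale_def algebra_simps)

lemma nc_scale_scale: "nc_scale c (nc_scale d p) = nc_scale (c * d) p"
  by (rule ext) (simp add: nc_scale_def)

lemma nc_scale_one [simp]: "nc_scale 1 p = p"
  by (rule ext) (simp add: nc_scale_def)

lemma nc_scale_zero [simp]: "nc_scale 0 p = 0" "nc_scale c 0 = 0"
  by (auto simp add: nc_scale_def)

lemma nc_scale_sum_list: "nc_scale c (sum_list xs) = sum_list (map (nc_scale c) xs)"
  by (induction xs) (simp_all only: list.map sum_list.Nil sum_list.Cons nc_scale_zero nc_scale_add)

lemma nc_mult_one_left [simp]: "nc_mult nc_one p = p"
proof (rule ext)
  fix w :: "'a list"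
  have "nc_mult nc_one p w = (\<Sum>k\<in>{0}. nc_one (take k w) * p (drop k w))"
    unfolding nc_mult_def by (rule sum.mono_neutral_right) (auto simp: nc_one_def)
  then show "nc_mult nc_one p w = p w" by (simp add: nc_one_def)
qed

lemma nc_mult_one_right [simp]: "nc_mult p nc_one = p"
proof (rule ext)
  fix w :: "'a list"
  have "nc_mult p nc_one w = (\<Sum>k\<in>{length w}. p (take k w) * nc_one (drop k w))"
    unfolding nc_mult_def by (rule sum.mono_neutral_right) (auto simp: nc_one_def)
  then show "nc_mult p nc_one w = p w" by (simp add: nc_one_def)
qed

lemma nc_mult_assoc: "nc_mult (nc_mult p q) r = nc_mult p (nc_mult q r)"
proof (rule ext)
  fix w :: "'a list"
  define n where "n = length w"
  define g where "g i l = p (take i w) * q (take l (drop i w)) * r (drop (i + l) w)" for i l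
  have "nc_mult (nc_mult p q) r w = (\<Sum>k\<le>n. \<Sum>i\<le>k. g i (k - i))"
    unfolding nc_mult_def n_def g_def sum_distrib_right
    by (intro sum.cong refl) (auto simp add: min_def take_drop)
  also have "\<dots> = (\<Sum>(i, l)\<in>{(i, l). i + l \<le> n}. g i l)"
    by (rule sum.triangle_reindex_eq[symmetric])
  also have "\<dots> = (\<Sum>(i, l)\<in>(SIGMA i:{..n}. {..n - i}). g i l)"
    by (intro sum.cong refl) auto
  also have "\<dots> = (\<Sum>i\<le>n. \<Sum>l\<le>n - i. g i l)"
    by (rule sum.Sigma[symmetric]) auto
  also have "\<dots> = nc_mult p (nc_mult q r) w"
    unfolding nc_mult_def n_def g_def sum_distrib_left
    by (intro sum.cong refl) (simp add: mult.assoc, simp add: drop_drop add.commute)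
  finally show "nc_mult (nc_mult p q) r w = nc_mult p (nc_mult q r) w" .
qed

lemma nc_star_mult: "nc_star (nc_mult p q) = nc_mult (nc_star q) (nc_star p)"
proof (rule ext)
  fix w :: "'a list"
  define n where "n = length w"
  have "nc_star (nc_mult p q) w = (\<Sum>k\<le>n. cnj (p (take k (rev w))) * cnj (q (drop k (rev w))))"
    by (simp add: nc_star_def nc_mult_def n_def)
  also have "\<dots> = (\<Sum>k\<le>n. cnj (p (take (n - k) (rev w))) * cnj (q (drop (n - k) (rev w))))"
    by (rule sum.reindex_bij_witness[where i="\<lambda>k. n - k" and j="\<lambda>k. n - k"]) auto
  also have "\<dots> = nc_mult (nc_star q) (nc_star p) w"
    by (simp add: nc_star_def nc_mult_def n_def rev_take rev_drop mult.commute)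
  finally show "nc_star (nc_mult p q) w = nc_mult (nc_star q) (nc_star p) w" .
qed

lemma nc_star_add: "nc_star (p + q) = nc_star p + nc_star q"
  by (rule ext) (simp add: nc_star_def)

lemma nc_star_diff: "nc_star (p - q) = nc_star p - nc_star q"
  by (rule ext) (simp add: nc_star_def)

lemma nc_star_zero [simp]: "nc_star 0 = 0"
  by (rule ext) (simp add: nc_star_def)

lemma nc_star_scale: "nc_star (nc_scale c p) = nc_scale (cnj c) (nc_star p)"
  by (rule ext) (simp add: nc_star_def nc_scale_def)

lemma nc_star_one [simp]: "nc_star nc_one = nc_one"
  by (rule ext) (simp add: nc_star_def nc_one_def)

lemma nc_star_var [simp]: "nc_star (nc_var i) = nc_var i"
  by (rule ext) (auto simp add: nc_star_def nc_var_def)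

lemma nc_star_sum: "nc_star (\<Sum>a\<in>A. f a) = (\<Sum>a\<in>A. nc_star (f a))"
  by (rule ext) (simp add: nc_star_def sum_fun_apply)

lemma nc_star_lin: "nc_star (nc_lin a) = nc_lin a"
  by (simp add: nc_lin_def nc_star_sum nc_star_scale)

lemma nc_lin_add_scaled_var:
  "nc_lin (\<lambda>j. e j + s * (if j = i then 1 else 0)) = nc_lin e + nc_scale (complex_of_real s) (nc_var i)"
proof (rule ext)
  fix w
  have "nc_lin (\<lambda>j. e j + s * (if j = i then 1 else 0)) w
      = (\<Sum>j\<in>UNIV. complex_of_real (e j) * nc_var j w) + (\<Sum>j\<in>UNIV. if j = i then complex_of_real s * nc_var j w else 0)"
    unfolding nc_lin_def sum_fun_apply nc_scale_def sum.distrib[symmetric]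
    by (intro sum.cong refl) (simp add: distrib_right)
  then show "nc_lin (\<lambda>j. e j + s * (if j = i then 1 else 0)) w = (nc_lin e + nc_scale (complex_of_real s) (nc_var i)) w"
    by (simp add: nc_lin_def sum_fun_apply nc_scale_def)
qed

lemma fsupp_zero [simp]: "fsupp 0"
  by (simp add: fsupp_def)

lemma fsupp_one [simp]: "fsupp nc_one"
  unfolding fsupp_def by (rule finite_subset[of _ "{[]}"]) (auto simp: nc_one_def)

lemma fsupp_var [simp]: "fsupp (nc_var i)"
  unfolding fsupp_def by (rule finite_subset[of _ "{[i]}"]) (auto simp: nc_var_def)

lemma fsupp_add [simp]: "fsupp p \<Longrightarrow> fsupp q \<Longrightarrow> fsupp (p + q)"
  unfolding fsupp_def by (rule finite_subset[of _ "{w. p w \<noteq> 0} \<union> {w. q w \<noteq> 0}"]) auto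

lemma fsupp_diff [simp]: "fsupp p \<Longrightarrow> fsupp q \<Longrightarrow> fsupp (p - q)"
  unfolding fsupp_def by (rule finite_subset[of _ "{w. p w \<noteq> 0} \<union> {w. q w \<noteq> 0}"]) auto

lemma fsupp_scale [simp]: "fsupp p \<Longrightarrow> fsupp (nc_scale c p)"
  unfolding fsupp_def nc_scale_def by (rule finite_subset[of _ "{w. p w \<noteq> 0}"]) auto

lemma fsupp_star [simp]: "fsupp p \<Longrightarrow> fsupp (nc_star p)"
  unfolding fsupp_def nc_star_def
  by (rule finite_subset[of _ "rev ` {w. p w \<noteq> 0}"]) (auto intro: image_eqI[of _ rev, OF rev_rev_ident[symmetric]])

lemma fsupp_mult [simp]:
  assumes "fsupp p" "fsupp q"
  shows "fsupp (nc_mult p q)"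
proof -
  have "{w. nc_mult p q w \<noteq> 0} \<subseteq> (\<lambda>(u, v). u @ v) ` ({w. p w \<noteq> 0} \<times> {w. q w \<noteq> 0})"
  proof
    fix w assume "w \<in> {w. nc_mult p q w \<noteq> 0}"
    then obtain k where "p (take k w) * q (drop k w) \<noteq> 0"
      unfolding nc_mult_def by (meson mem_Collect_eq sum.neutral)
    then show "w \<in> (\<lambda>(u, v). u @ v) ` ({w. p w \<noteq> 0} \<times> {w. q w \<noteq> 0})"
      by (intro image_eqI[of _ _ "(take k w, drop k w)"]) auto
  qed
  moreover have "finite ((\<lambda>(u, v). u @ v) ` ({w. p w \<noteq> 0} \<times> {w. q w \<noteq> 0}))"
    using assms by (simp add: fsupp_def)
  ultimately show ?thesis
    unfolding fsupp_def by (rule finite_subset)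
qed

lemma fsupp_sum [simp]: "(\<And>a. a \<in> A \<Longrightarrow> fsupp (f a)) \<Longrightarrow> fsupp (\<Sum>a\<in>A. f a)"
  by (induction A rule: infinite_finite_induct) simp_all

lemma fsupp_lin [simp]: "fsupp (nc_lin a)"
  by (simp add: nc_lin_def)

lemma fsupp_pow [simp]: "fsupp X \<Longrightarrow> fsupp (nc_pow X k)"
  by (induction k) simp_all

lemma nc_polyeval_degree_bound:
  assumes "degree p \<le> N"
  shows "nc_polyeval p X = (\<Sum>k\<le>N. nc_scale (complex_of_real (coeff p k)) (nc_pow X k))"
  unfolding nc_polyeval_def
  by (rule sum.mono_neutral_left) (use assms in \<open>auto simp: coeff_eq_0\<close>)

lemma nc_polyeval_0 [simp]: "nc_polyeval 0 X = 0"
  by (simp add: nc_polyeval_def)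

lemma nc_polyeval_pCons:
  "nc_polyeval (pCons a p) X = nc_scale (complex_of_real a) nc_one + nc_mult X (nc_polyeval p X)"
proof -
  have "nc_polyeval (pCons a p) X =
     (\<Sum>k\<le>Suc (degree p). nc_scale (complex_of_real (coeff (pCons a p) k)) (nc_pow X k))"
    by (rule nc_polyeval_degree_bound) (simp add: degree_pCons_le)
  also have "\<dots> = nc_scale (complex_of_real a) nc_one +
      (\<Sum>k\<le>degree p. nc_scale (complex_of_real (coeff p k)) (nc_pow X (Suc k)))"
    by (subst sum.atMost_Suc_shift) (simp add: add.commute)
  also have "(\<Sum>k\<le>degree p. nc_scale (complex_of_real (coeff p k)) (nc_pow X (Suc k)))
      = nc_mult X (nc_polyeval p X)"
    by (simp add: nc_polyeval_def nc_mult_sum_right nc_mult_scale_right)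
  finally show ?thesis .
qed

lemma nc_polyeval_add: "nc_polyeval (p + q) X = nc_polyeval p X + nc_polyeval q X"
proof (induction p arbitrary: q)
  case 0
  show ?case by (simp only: add_0 nc_polyeval_0)
next
  case (pCons a p)
  obtain b q' where q: "q = pCons b q'" by (cases q)
  have "nc_polyeval (pCons a p + q) X = nc_polyeval (pCons (a + b) (p + q')) X"
    by (simp only: q add_pCons)
  also have "\<dots> = nc_scale (complex_of_real a) nc_one + nc_scale (complex_of_real b) nc_one
      + (nc_mult X (nc_polyeval p X) + nc_mult X (nc_polyeval q' X))"
    by (simp only: nc_polyeval_pCons pCons.IH nc_mult_add_right of_real_add nc_scale_add_left)
  also have "\<dots> = nc_polyeval (pCons a p) X + nc_polyeval q X"
    by (simp only: q nc_polyeval_pCons ac_simps)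
  finally show ?case .
qed

lemma nc_polyeval_smult: "nc_polyeval (smult c p) X = nc_scale (complex_of_real c) (nc_polyeval p X)"
proof (induction p)
  case 0
  show ?case by (simp only: smult_0_right nc_polyeval_0 nc_scale_zero)
next
  case (pCons a p)
  show ?case
    by (simp only: smult_pCons nc_polyeval_pCons pCons.IH nc_mult_scale_right nc_scale_add
      nc_scale_scale of_real_mult)
qed

lemma nc_polyeval_diff: "nc_polyeval (p - q) X = nc_polyeval p X - nc_polyeval q X"
  using nc_polyeval_add[of p "- q" X] nc_polyeval_smult[of "- 1" q X]
  by (simp add: fun_eq_iff nc_scale_def)

lemma fsupp_nc_polyeval [simp]: "fsupp X \<Longrightarrow> fsupp (nc_polyeval p X)"
  unfolding nc_polyeval_def by simp

lemma nc_polyeval_commute: "nc_mult X (nc_polyeval p X) = nc_mult (nc_polyeval p X) X"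
proof (induction p)
  case 0
  show ?case by (simp only: nc_polyeval_0 nc_mult_zero_left nc_mult_zero_right)
next
  case (pCons a p)
  have "nc_mult X (nc_polyeval (pCons a p) X) =
     nc_scale (complex_of_real a) X + nc_mult X (nc_mult X (nc_polyeval p X))"
    by (simp only: nc_polyeval_pCons nc_mult_add_right nc_mult_scale_right nc_mult_one_right)
  also have "\<dots> = nc_scale (complex_of_real a) X + nc_mult (nc_mult X (nc_polyeval p X)) X"
    by (simp only: nc_mult_assoc[symmetric] pCons.IH)
  also have "\<dots> = nc_mult (nc_polyeval (pCons a p) X) X"
    by (simp only: nc_polyeval_pCons nc_mult_add_left nc_mult_scale_left nc_mult_one_left)
  finally show ?case .
qed

lemma nc_polyeval_mult: "nc_polyeval (p * q) X = nc_mult (nc_polyeval p X) (nc_polyeval q X)"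
proof (induction p)
  case 0
  show ?case by (simp only: mult_zero_left nc_polyeval_0 nc_mult_zero_left)
next
  case (pCons a p)
  have "pCons a p * q = smult a q + pCons 0 (p * q)" by simp
  then have "nc_polyeval (pCons a p * q) X = nc_scale (complex_of_real a) (nc_polyeval q X)
      + (nc_scale 0 nc_one + nc_mult X (nc_mult (nc_polyeval p X) (nc_polyeval q X)))"
    by (simp only: nc_polyeval_add nc_polyeval_smult nc_polyeval_pCons pCons.IH of_real_0)
  also have "\<dots> = nc_mult (nc_polyeval (pCons a p) X) (nc_polyeval q X)"
    by (simp only: nc_polyeval_pCons nc_mult_add_left nc_mult_scale_left nc_mult_one_left
      nc_mult_assoc nc_scale_zero add_0)
  finally show ?case .
qed

lemma nc_polyeval_X: "nc_polyeval [:0, 1:] X = X"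
  by (simp only: nc_polyeval_pCons nc_polyeval_0 nc_mult_zero_right of_real_0 of_real_1
     nc_scale_zero nc_scale_one nc_mult_one_right add_0 add_0_right)

lemma nc_star_polyeval:
  assumes "nc_star X = X"
  shows "nc_star (nc_polyeval p X) = nc_polyeval p X"
proof (induction p)
  case 0
  show ?case by (simp only: nc_polyeval_0 nc_star_zero)
next
  case (pCons a p)
  show ?case
    by (simp only: nc_polyeval_pCons nc_star_add nc_star_scale nc_star_mult pCons.IH assms
        nc_polyeval_commute nc_star_one complex_cnj_complex_of_real)
qed

section \<open>Square roots of \<open>t\<close> modulo a polynomial with positive roots\<close>

lemma map_poly_of_real_mult:
  "map_poly complex_of_real (p * q) = map_poly complex_of_real p * map_poly complex_of_real q"
  by (rule poly_eqI) (simp add: coeff_map_poly coeff_mult)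

lemma poly_map_poly_of_real:
  "poly (map_poly complex_of_real p) (complex_of_real x) = complex_of_real (poly p x)"
  by (induction p) (auto simp: map_poly_pCons)

lemma quadratic_eq_solvable:
  fixes l a b c :: real
  assumes "l > 0" and "l - b * b = a * c"
  obtains v where "a * v * v + 2 * b * v = c"
proof (cases "a = 0")
  case True
  with assms have "b \<noteq> 0" by auto
  with True assms show ?thesis by (intro that[of "c / (2 * b)"]) simp
next
  case False
  have "a * ((sqrt l - b) / a) * ((sqrt l - b) / a) + 2 * b * ((sqrt l - b) / a)
      = (sqrt l * sqrt l - b * b) / a"
    using False by (simp add: field_simps)
  also have "\<dots> = c" using assms False by simp
  finally show ?thesis by (rule that)
qed

lemma X_square_mod_poly_with_positive_roots:
  fixes q :: "real poly"
  assumes "q \<noteq> 0" and "\<forall>z. poly (map_poly complex_of_real q) z = 0 \<longrightarrow> z \<in> \<real> \<and> 0 < Re z"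
  shows "\<exists>s r. [:0, 1:] - s * s = q * r"
  using assms
proof (induction "degree q" arbitrary: q rule: less_induct)
  case less
  show ?case
  proof (cases "degree q = 0")
    case True
    then obtain c where "q = [:c:]" by (meson degree_eq_zeroE)
    with less.prems have "[:0, 1:] - 0 * 0 = q * smult (1 / c) [:0, 1:]" by simp
    then show ?thesis by blast
  next
    case False
    moreover have "degree (map_poly complex_of_real q) = degree q"
      by (simp add: degree_map_poly)
    ultimately obtain z where z: "poly (map_poly complex_of_real q) z = 0"
      using fundamental_theorem_of_algebra_alt[of "map_poly complex_of_real q"] by fastforce
    with less.prems obtain l where zl: "z = complex_of_real l" and l: "l > 0"
      by (metis Reals_cases Re_complex_of_real)
    have "poly q l = 0" using z zl poly_map_poly_of_real[of q l] by simp
    then obtain q' where q': "q = [:-l, 1:] * q'" by (metis poly_eq_0_iff_dvd dvdE)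
    with less.prems(1) have "q' \<noteq> 0" by auto
    then have "degree q = 1 + degree q'"
      unfolding q' by (subst degree_mult_eq) simp_all
    then have "degree q' < degree q" by simp
    moreover have "\<forall>w. poly (map_poly complex_of_real q') w = 0 \<longrightarrow> w \<in> \<real> \<and> 0 < Re w"
    proof (intro allI impI)
      fix w assume "poly (map_poly complex_of_real q') w = 0"
      then have "poly (map_poly complex_of_real q) w = 0"
        unfolding q' map_poly_of_real_mult poly_mult by (simp only: mult_zero_right)
      then show "w \<in> \<real> \<and> 0 < Re w" using less.prems(2) by blast
    qed
    ultimately obtain s' r' where sr: "[:0, 1:] - s' * s' = q' * r'"
      using less.hyps \<open>q' \<noteq> 0\<close> by blast
    have "l - poly s' l * poly s' l = poly q' l * poly r' l"
      using arg_cong[OF sr, of "\<lambda>p. poly p l"] by simp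
    then obtain v where v: "poly q' l * v * v + 2 * poly s' l * v = poly r' l"
      by (rule quadratic_eq_solvable[OF l])
    \<comment> \<open>\<open>s = s' + v q'\<close> has \<open>t - s\<^sup>2 = q' g\<close> with \<open>g(l) = 0\<close> by the choice of \<open>v\<close>.\<close>
    define g where "g = r' - smult v (s' + s') - smult (v * v) q'"
    have "poly g l = 0" using v by (simp add: g_def algebra_simps)
    then obtain g' where g': "g = [:-l, 1:] * g'" by (metis poly_eq_0_iff_dvd dvdE)
    have "[:0, 1:] - (s' + smult v q') * (s' + smult v q') = q' * g"
      using sr by (simp add: g_def algebra_simps)
    also have "\<dots> = q * g'" by (simp add: g' q' algebra_simps)
    finally show ?thesis by blast
  qed
qed

section \<open>Hyperbolic polynomials\<close>

lemma poly_hline: "poly (hline h a e) t = mpoly_eval h (\<lambda>i. a i - t * e i)"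
  by (simp add: hline_def mpoly_eval_def poly_sum poly_prod)

lemma homogeneous_scale:
  assumes "homogeneous h"
  obtains d where "\<And>c x. mpoly_eval h (\<lambda>i. c * x i) = c ^ d * mpoly_eval h x"
proof -
  obtain d where d: "\<And>\<alpha>. \<alpha> \<in> Poly_Mapping.keys h \<Longrightarrow> (\<Sum>i\<in>UNIV. Poly_Mapping.lookup \<alpha> i) = d"
    using assms unfolding homogeneous_def by blast
  have "mpoly_eval h (\<lambda>i. c * x i) = c ^ d * mpoly_eval h x" for c x
  proof -
    have "mpoly_eval h (\<lambda>i. c * x i) = (\<Sum>\<alpha>\<in>Poly_Mapping.keys h. Poly_Mapping.lookup h \<alpha> *
        (c ^ (\<Sum>i\<in>UNIV. Poly_Mapping.lookup \<alpha> i) * (\<Prod>i\<in>UNIV. x i ^ Poly_Mapping.lookup \<alpha> i)))"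
      unfolding mpoly_eval_def
      by (intro sum.cong refl) (simp add: power_mult_distrib prod.distrib power_sum)
    also have "\<dots> = (\<Sum>\<alpha>\<in>Poly_Mapping.keys h. c ^ d * (Poly_Mapping.lookup h \<alpha> *
        (\<Prod>i\<in>UNIV. x i ^ Poly_Mapping.lookup \<alpha> i)))"
      by (intro sum.cong refl) (simp add: d)
    also have "\<dots> = c ^ d * mpoly_eval h x"
      by (simp add: mpoly_eval_def sum_distrib_left)
    finally show ?thesis .
  qed
  then show ?thesis by (rule that)
qed

lemma mpoly_eval_nonzero_near:
  assumes "mpoly_eval h e \<noteq> 0"
  obtains \<epsilon> where "\<epsilon> > 0" and "\<And>r. \<bar>r\<bar> < \<epsilon> \<Longrightarrow> mpoly_eval h (\<lambda>i. e i + r * \<delta> i) \<noteq> 0"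
proof -
  define g where "g = hline h e (\<lambda>i. - \<delta> i)"
  have g: "poly g r = mpoly_eval h (\<lambda>i. e i + r * \<delta> i)" for r
    by (simp add: g_def poly_hline)
  have "(poly g \<longlongrightarrow> poly g 0) (nhds 0)"
    using tendsto_at_iff_tendsto_nhds isCont_def by (metis poly_isCont)
  then have "\<forall>\<^sub>F r in nhds 0. poly g r \<noteq> 0"
    by (rule tendsto_imp_eventually_ne) (simp add: g assms)
  then show ?thesis
    unfolding eventually_nhds_metric by (auto simp: g dist_real_def intro: that)
qed

text \<open>A root \<open>t \<le> 0\<close> of \<open>h\<^sub>a\<^sub>,\<^sub>e\<close> for \<open>a = e + s\<delta>\<close> rescales, by homogeneity, to a zero of \<open>h\<close>
  at \<open>e + (s / (1 - t)) \<delta>\<close>.\<close>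
lemma hcone_interior_near_direction:
  assumes "homogeneous h" and "hyperbolic h e"
  obtains \<epsilon> where "\<epsilon> > 0" and "\<And>s. \<bar>s\<bar> \<le> \<epsilon> \<Longrightarrow> (\<lambda>i. e i + s * \<delta> i) \<in> hcone_interior h e"
proof -
  obtain d where hom: "\<And>c x. mpoly_eval h (\<lambda>i. c * x i) = c ^ d * mpoly_eval h x"
    using homogeneous_scale[OF assms(1)] by blast
  obtain \<epsilon> where \<epsilon>: "\<epsilon> > 0" and nz: "\<And>r. \<bar>r\<bar> < \<epsilon> \<Longrightarrow> mpoly_eval h (\<lambda>i. e i + r * \<delta> i) \<noteq> 0"
    using mpoly_eval_nonzero_near assms(2) unfolding hyperbolic_def by blast
  have "(\<lambda>i. e i + s * \<delta> i) \<in> hcone_interior h e" if s: "\<bar>s\<bar> \<le> \<epsilon> / 2" for s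
    unfolding hcone_interior_def
  proof (intro CollectI allI impI)
    fix z assume z: "poly (map_poly complex_of_real (hline h (\<lambda>i. e i + s * \<delta> i) e)) z = 0"
    with assms(2) obtain t where zt: "z = complex_of_real t"
      unfolding hyperbolic_def by (metis Reals_cases)
    with z have t: "poly (hline h (\<lambda>i. e i + s * \<delta> i) e) t = 0"
      by (simp add: poly_map_poly_of_real)
    have "t > 0"
    proof (rule ccontr)
      assume "\<not> t > 0"
      then have c: "1 - t \<ge> 1" by simp
      have "(\<lambda>i. e i + s * \<delta> i - t * e i) = (\<lambda>i. (1 - t) * (e i + (s / (1 - t)) * \<delta> i))"
        using c by (auto simp: field_simps)
      with t c have "mpoly_eval h (\<lambda>i. e i + (s / (1 - t)) * \<delta> i) = 0"
        by (simp add: poly_hline hom)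
      moreover have "\<bar>s / (1 - t)\<bar> \<le> \<bar>s\<bar>"
        using c by (simp add: divide_le_eq mult_le_cancel_left1)
      then have "\<bar>s / (1 - t)\<bar> < \<epsilon>" using s \<epsilon> by linarith
      ultimately show False using nz by blast
    qed
    then show "z \<in> \<real> \<and> 0 < Re z" using zt by simp
  qed
  then show ?thesis using \<epsilon> by (intro that[of "\<epsilon> / 2"]) simp_all
qed

section \<open>Sums of hermitian squares modulo an ideal\<close>

lemma nc_ideal_scale: "p \<in> nc_ideal G \<Longrightarrow> nc_scale c p \<in> nc_ideal G"
  using nc_ideal.lmult[of "nc_scale c nc_one" p G] by (simp add: nc_mult_scale_left)

lemma sos_mod_cong:
  assumes "sos_mod (nc_ideal G) x" and "x' - x \<in> nc_ideal G"
  shows "sos_mod (nc_ideal G) x'"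
proof -
  obtain qs where qs: "\<forall>q\<in>set qs. fsupp q"
    and x: "x - sum_list (map (\<lambda>q. nc_mult (nc_star q) q) qs) \<in> nc_ideal G"
    using assms(1) unfolding sos_mod_def by blast
  have "x' - sum_list (map (\<lambda>q. nc_mult (nc_star q) q) qs)
      = (x' - x) + (x - sum_list (map (\<lambda>q. nc_mult (nc_star q) q) qs))"
    by simp
  also have "\<dots> \<in> nc_ideal G" using assms(2) x by (rule nc_ideal.add)
  finally show ?thesis unfolding sos_mod_def using qs by blast
qed

lemma sos_mod_zero: "sos_mod (nc_ideal G) 0"
  unfolding sos_mod_def by (intro exI[of _ "[]"]) (simp add: nc_ideal.zero)

lemma sos_mod_add:
  assumes "sos_mod (nc_ideal G) x" and "sos_mod (nc_ideal G) y"
  shows "sos_mod (nc_ideal G) (x + y)"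
proof -
  obtain qs where qs: "\<forall>q\<in>set qs. fsupp q"
    and x: "x - sum_list (map (\<lambda>q. nc_mult (nc_star q) q) qs) \<in> nc_ideal G"
    using assms(1) unfolding sos_mod_def by blast
  obtain rs where rs: "\<forall>q\<in>set rs. fsupp q"
    and y: "y - sum_list (map (\<lambda>q. nc_mult (nc_star q) q) rs) \<in> nc_ideal G"
    using assms(2) unfolding sos_mod_def by blast
  have "x + y - sum_list (map (\<lambda>q. nc_mult (nc_star q) q) (qs @ rs)) =
     (x - sum_list (map (\<lambda>q. nc_mult (nc_star q) q) qs)) + (y - sum_list (map (\<lambda>q. nc_mult (nc_star q) q) rs))"
    by (simp only: map_append sum_list_append add_diff_add)
  also have "\<dots> \<in> nc_ideal G" using x y by (rule nc_ideal.add)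
  finally show ?thesis unfolding sos_mod_def using qs rs by (intro exI[of _ "qs @ rs"]) auto
qed

lemma sos_mod_square: "fsupp q \<Longrightarrow> sos_mod (nc_ideal G) (nc_mult (nc_star q) q)"
  unfolding sos_mod_def by (intro exI[of _ "[q]"]) (simp add: nc_ideal.zero)

lemma sos_mod_scale:
  assumes "sos_mod (nc_ideal G) x" and "r \<ge> 0"
  shows "sos_mod (nc_ideal G) (nc_scale (complex_of_real r) x)"
proof -
  obtain qs where qs: "\<forall>q\<in>set qs. fsupp q"
    and x: "x - sum_list (map (\<lambda>q. nc_mult (nc_star q) q) qs) \<in> nc_ideal G"
    using assms(1) unfolding sos_mod_def by blast
  define c where "c = complex_of_real (sqrt r)"
  have "c * cnj c = complex_of_real r"
    using assms(2) by (simp add: c_def flip: of_real_mult)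
  then have sq: "nc_mult (nc_star (nc_scale c q)) (nc_scale c q) = nc_scale (complex_of_real r) (nc_mult (nc_star q) q)" for q
    by (simp only: nc_star_scale nc_mult_scale_left nc_mult_scale_right nc_scale_scale)
  have "nc_scale (complex_of_real r) x - sum_list (map (\<lambda>q. nc_mult (nc_star q) q) (map (nc_scale c) qs))
     = nc_scale (complex_of_real r) (x - sum_list (map (\<lambda>q. nc_mult (nc_star q) q) qs))"
    by (simp only: nc_scale_diff nc_scale_sum_list map_map comp_def sq)
  also have "\<dots> \<in> nc_ideal G" using x by (rule nc_ideal_scale)
  finally show ?thesis unfolding sos_mod_def using qs by (intro exI[of _ "map (nc_scale c) qs"]) auto
qed

lemma sos_mod_conj:
  assumes "sos_mod (nc_ideal G) x" and "fsupp y"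
  shows "sos_mod (nc_ideal G) (nc_mult (nc_star y) (nc_mult x y))"
proof -
  obtain qs where qs: "\<forall>q\<in>set qs. fsupp q"
    and x: "x - sum_list (map (\<lambda>q. nc_mult (nc_star q) q) qs) \<in> nc_ideal G"
    using assms(1) unfolding sos_mod_def by blast
  have sq: "nc_mult (nc_star (nc_mult q y)) (nc_mult q y) = nc_mult (nc_star y) (nc_mult (nc_mult (nc_star q) q) y)" for q
    by (simp only: nc_star_mult nc_mult_assoc)
  have "nc_mult (nc_star y) (nc_mult x y) - sum_list (map (\<lambda>q. nc_mult (nc_star q) q) (map (\<lambda>q. nc_mult q y) qs))
     = nc_mult (nc_star y) (nc_mult (x - sum_list (map (\<lambda>q. nc_mult (nc_star q) q) qs)) y)"
    by (simp only: nc_mult_diff_left nc_mult_diff_right nc_mult_sum_list_left nc_mult_sum_list_right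
       map_map comp_def sq)
  also have "\<dots> \<in> nc_ideal G" using x assms(2) by (intro nc_ideal.lmult nc_ideal.rmult) simp_all
  finally show ?thesis unfolding sos_mod_def using qs assms(2)
    by (intro exI[of _ "map (\<lambda>q. nc_mult q y) qs"]) auto
qed

abbreviation nc_const :: "real \<Rightarrow> 'n ncpoly" where
  "nc_const r \<equiv> nc_scale (complex_of_real r) nc_one"

lemma sos_mod_const: "r \<ge> 0 \<Longrightarrow> sos_mod (nc_ideal G) (nc_const r)"
  using sos_mod_scale[OF sos_mod_square[OF fsupp_one]] by simp

lemma invertible_mod_lin:
  assumes "mpoly_eval h a \<noteq> 0"
  shows "invertible_mod (Jideal h e) (nc_lin a)"
proof -
  define X where "X = nc_lin a"
  obtain c p where hp: "hline h a e = pCons c p" by (cases "hline h a e")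
  have "c = mpoly_eval h a" using poly_hline[of h a e 0] by (simp add: hp)
  with assms have c: "c \<noteq> 0" by simp
  define y where "y = nc_scale (complex_of_real (- 1 / c)) (nc_polyeval p X)"
  have "nc_polyeval (hline h a e) X \<in> Jideal h e"
    unfolding Jideal_def X_def by (rule nc_ideal.gen) blast
  then have "nc_scale (complex_of_real (- 1 / c)) (nc_polyeval (hline h a e) X) \<in> Jideal h e"
    unfolding Jideal_def by (rule nc_ideal_scale)
  moreover have "nc_scale (complex_of_real (- 1 / c)) (nc_polyeval (hline h a e) X) = nc_mult X y - nc_one"
    unfolding y_def nc_mult_scale_right hp nc_polyeval_pCons
    using c by (simp add: fun_eq_iff nc_scale_def field_simps)
  moreover have "nc_mult y X = nc_mult X y"
    by (simp add: y_def nc_mult_scale_left nc_mult_scale_right nc_polyeval_commute)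
  moreover have "fsupp y" by (simp add: y_def X_def)
  ultimately show ?thesis
    unfolding invertible_mod_def X_def[symmetric] by metis
qed

lemma sos_mod_lin_of_hcone_interior:
  assumes "a \<in> hcone_interior h e"
  shows "sos_mod (Jideal h e) (nc_lin a)"
proof -
  define X where "X = nc_lin a"
  have roots: "\<forall>z. poly (map_poly complex_of_real (hline h a e)) z = 0 \<longrightarrow> z \<in> \<real> \<and> 0 < Re z"
    using assms by (simp add: hcone_interior_def)
  then have "hline h a e \<noteq> 0" using roots[rule_format, of 0] by auto
  then obtain s r where sr: "[:0, 1:] - s * s = hline h a e * r"
    using X_square_mod_poly_with_positive_roots roots by blast
  define S where "S = nc_polyeval s X"
  have S: "nc_star S = S" "fsupp S"
    unfolding S_def X_def by (simp_all add: nc_star_polyeval nc_star_lin)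
  have "X - nc_mult S S = nc_mult (nc_polyeval (hline h a e) X) (nc_polyeval r X)"
    using arg_cong[OF sr, of "\<lambda>q. nc_polyeval q X"]
    by (simp only: nc_polyeval_diff nc_polyeval_mult nc_polyeval_X S_def)
  also have "\<dots> \<in> Jideal h e"
    unfolding Jideal_def X_def by (intro nc_ideal.rmult nc_ideal.gen) auto
  finally have "X - nc_mult (nc_star S) S \<in> Jideal h e"
    unfolding S(1) .
  then show ?thesis
    unfolding Jideal_def X_def by (rule sos_mod_cong[OF sos_mod_square[OF S(2)]])
qed

section \<open>Bounded elements\<close>

definition bounded_mod :: "'n ncpoly set \<Rightarrow> 'n ncpoly \<Rightarrow> bool" where
  "bounded_mod I x \<longleftrightarrow> fsupp x \<and> (\<exists>N\<ge>0. sos_mod I (nc_const N - nc_mult (nc_star x) x))"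

definition order_bounded_mod :: "'n ncpoly set \<Rightarrow> 'n ncpoly \<Rightarrow> bool" where
  "order_bounded_mod I y \<longleftrightarrow> fsupp y \<and> (\<exists>N. sos_mod I (nc_const N + y) \<and> sos_mod I (nc_const N - y))"

lemma bounded_mod_one: "bounded_mod (nc_ideal G) nc_one"
  unfolding bounded_mod_def using sos_mod_zero by (intro conjI exI[of _ 1]) simp_all

lemma bounded_mod_mult:
  assumes "bounded_mod (nc_ideal G) x" and "bounded_mod (nc_ideal G) y"
  shows "bounded_mod (nc_ideal G) (nc_mult x y)"
proof -
  obtain N where N: "N \<ge> 0" "sos_mod (nc_ideal G) (nc_const N - nc_mult (nc_star x) x)" and "fsupp x"
    using assms(1) unfolding bounded_mod_def by blast
  obtain M where M: "M \<ge> 0" "sos_mod (nc_ideal G) (nc_const M - nc_mult (nc_star y) y)" and "fsupp y"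
    using assms(2) unfolding bounded_mod_def by blast
  have "sos_mod (nc_ideal G) (nc_mult (nc_star y) (nc_mult (nc_const N - nc_mult (nc_star x) x) y)
     + nc_scale (complex_of_real N) (nc_const M - nc_mult (nc_star y) y))"
    by (intro sos_mod_add sos_mod_conj sos_mod_scale N M \<open>fsupp y\<close>)
  moreover have "nc_mult (nc_star y) (nc_mult (nc_const N - nc_mult (nc_star x) x) y)
     + nc_scale (complex_of_real N) (nc_const M - nc_mult (nc_star y) y)
     = nc_const (N * M) - nc_mult (nc_star (nc_mult x y)) (nc_mult x y)"
    by (simp only: nc_star_mult nc_mult_diff_left nc_mult_diff_right nc_mult_scale_left
        nc_mult_scale_right nc_mult_one_left nc_mult_assoc) (rule ext, simp only: plus_fun_apply minus_apply nc_scale_def, simp add: algebra_simps)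
  ultimately show ?thesis
    unfolding bounded_mod_def using N M \<open>fsupp x\<close> \<open>fsupp y\<close> by (intro conjI exI[of _ "N * M"]) simp_all
qed

lemma bounded_mod_scale:
  assumes "bounded_mod (nc_ideal G) x"
  shows "bounded_mod (nc_ideal G) (nc_scale c x)"
proof -
  obtain N where N: "N \<ge> 0" "sos_mod (nc_ideal G) (nc_const N - nc_mult (nc_star x) x)" and "fsupp x"
    using assms unfolding bounded_mod_def by blast
  have cc: "c * cnj c = complex_of_real ((cmod c)\<^sup>2)" by (metis complex_norm_square)
  have "sos_mod (nc_ideal G) (nc_scale (complex_of_real ((cmod c)\<^sup>2)) (nc_const N - nc_mult (nc_star x) x))"
    using N by (intro sos_mod_scale) simp_all
  moreover have "nc_scale (complex_of_real ((cmod c)\<^sup>2)) (nc_const N - nc_mult (nc_star x) x) =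
     nc_const ((cmod c)\<^sup>2 * N) - nc_mult (nc_star (nc_scale c x)) (nc_scale c x)"
    by (simp only: nc_star_scale nc_mult_scale_left nc_mult_scale_right nc_scale_scale cc
       nc_scale_diff of_real_mult)
  ultimately show ?thesis
    unfolding bounded_mod_def using N \<open>fsupp x\<close> by (intro conjI exI[of _ "(cmod c)\<^sup>2 * N"]) simp_all
qed

lemma bounded_mod_of_sos_one_plus_minus:
  assumes "fsupp x" and "nc_star x = x"
    and "sos_mod (nc_ideal G) (nc_one + x)" and "sos_mod (nc_ideal G) (nc_one - x)"
  shows "bounded_mod (nc_ideal G) x"
proof -
  let ?A = "nc_one + x" and ?B = "nc_one - x"
  have "sos_mod (nc_ideal G) (nc_scale (complex_of_real (1 / 2))
     (nc_mult (nc_star ?B) (nc_mult ?A ?B) + nc_mult (nc_star ?A) (nc_mult ?B ?A)))"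
    using assms(1) by (intro sos_mod_scale sos_mod_add sos_mod_conj[OF assms(3)] sos_mod_conj[OF assms(4)]) simp_all
  moreover have "nc_scale (complex_of_real (1 / 2))
     (nc_mult (nc_star ?B) (nc_mult ?A ?B) + nc_mult (nc_star ?A) (nc_mult ?B ?A))
     = nc_const 1 - nc_mult (nc_star x) x"
    by (simp only: assms(2) nc_star_add nc_star_diff nc_star_one nc_mult_add_left nc_mult_add_right
        nc_mult_diff_left nc_mult_diff_right nc_mult_one_left nc_mult_one_right)
      (rule ext, simp only: plus_fun_apply minus_apply nc_scale_def, simp add: algebra_simps)
  ultimately show ?thesis
    unfolding bounded_mod_def using assms(1) by (intro conjI exI[of _ 1]) simp_all
qed

lemma bounded_mod_var:
  assumes "homogeneous h" and "hyperbolic h e"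
  shows "bounded_mod (Jideal h e) (nc_var i)"
proof -
  obtain \<epsilon> where \<epsilon>: "\<epsilon> > 0"
    and cone: "\<And>s. \<bar>s\<bar> \<le> \<epsilon> \<Longrightarrow> (\<lambda>j. e j + s * (if j = i then 1 else 0)) \<in> hcone_interior h e"
    using hcone_interior_near_direction[OF assms, where \<delta>="\<lambda>j. if j = i then 1 else 0"] by blast
  have sos: "sos_mod (Jideal h e) (nc_one + nc_scale (complex_of_real s) (nc_var i))"
    if "\<bar>s\<bar> \<le> \<epsilon>" for s
  proof -
    have "nc_one + nc_scale (complex_of_real s) (nc_var i) - nc_lin (\<lambda>j. e j + s * (if j = i then 1 else 0))
       = nc_one - nc_lin e"
      unfolding nc_lin_add_scaled_var by (rule add_diff_cancel_right)
    also have "\<dots> \<in> Jideal h e"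
      unfolding Jideal_def by (rule nc_ideal.gen) blast
    finally show ?thesis
      unfolding Jideal_def
      by (rule sos_mod_cong[OF sos_mod_lin_of_hcone_interior[OF cone[OF that], unfolded Jideal_def]])
  qed
  define x where "x = nc_scale (complex_of_real \<epsilon>) (nc_var i)"
  have x: "fsupp x" "nc_star x = x" by (simp_all add: x_def nc_star_scale)
  have "sos_mod (Jideal h e) (nc_one + x)"
    unfolding x_def using \<epsilon> by (intro sos) simp
  moreover have "nc_one - x = nc_one + nc_scale (complex_of_real (- \<epsilon>)) (nc_var i)"
    by (simp add: x_def fun_eq_iff nc_scale_def)
  then have "sos_mod (Jideal h e) (nc_one - x)"
    using \<epsilon> by (simp only:) (intro sos, simp)
  ultimately have "bounded_mod (Jideal h e) x"
    unfolding Jideal_def by (rule bounded_mod_of_sos_one_plus_minus[OF x])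
  then have "bounded_mod (Jideal h e) (nc_scale (complex_of_real (1 / \<epsilon>)) x)"
    unfolding Jideal_def by (rule bounded_mod_scale)
  then show ?thesis
    using \<epsilon> by (simp add: x_def nc_scale_scale)
qed

definition nc_monomial :: "'n list \<Rightarrow> 'n ncpoly" where
  "nc_monomial w = (\<lambda>u. if u = w then 1 else 0)"

lemma nc_monomial_Nil: "nc_monomial [] = nc_one"
  by (rule ext) (simp add: nc_monomial_def nc_one_def)

lemma nc_monomial_Cons: "nc_monomial (i # w) = nc_mult (nc_var i) (nc_monomial w)"
proof (rule ext)
  fix u :: "'a list"
  have summand: "nc_var i (take k u) * nc_monomial w (drop k u) = (if k = 1 \<and> u = i # w then 1 else 0)"
    if "k \<le> length u" for k
  proof (cases "take k u = [i] \<and> drop k u = w")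
    case True
    then have "length (take k u) = 1" by simp
    then have "k = 1" using that by (simp add: min_def split: if_splits)
    moreover have "u = i # w" using True append_take_drop_id[of k u] by simp
    ultimately show ?thesis using True by (simp add: nc_var_def nc_monomial_def)
  next
    case False
    then show ?thesis by (auto simp: nc_var_def nc_monomial_def)
  qed
  have "nc_mult (nc_var i) (nc_monomial w) u = (\<Sum>k\<le>length u. if k = 1 \<and> u = i # w then 1 else 0)"
    unfolding nc_mult_def by (intro sum.cong refl) (simp add: summand)
  also have "\<dots> = nc_monomial (i # w) u"
    by (cases "u = i # w") (auto simp: nc_monomial_def Suc_le_eq)
  finally show "nc_monomial (i # w) u = nc_mult (nc_var i) (nc_monomial w) u" ..
qed

lemma fsupp_eq_sum_monomials:
  assumes "fsupp b"
  shows "b = (\<Sum>w\<in>{w. b w \<noteq> 0}. nc_scale (b w) (nc_monomial w))"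
proof (rule ext)
  fix u
  have "(\<Sum>w\<in>{w. b w \<noteq> 0}. nc_scale (b w) (nc_monomial w)) u = (\<Sum>w\<in>{w. b w \<noteq> 0}. if u = w then b w else 0)"
    by (simp add: sum_fun_apply nc_scale_def nc_monomial_def if_distrib cong: if_cong)
  also have "\<dots> = b u" using assms unfolding fsupp_def by (simp add: sum.delta)
  finally show "b u = (\<Sum>w\<in>{w. b w \<noteq> 0}. nc_scale (b w) (nc_monomial w)) u" ..
qed

lemma bounded_mod_monomial:
  assumes "homogeneous h" and "hyperbolic h e"
  shows "bounded_mod (Jideal h e) (nc_monomial w)"
proof (induction w)
  case Nil
  show ?case unfolding nc_monomial_Nil Jideal_def by (rule bounded_mod_one)
next
  case (Cons i w)
  then show ?case unfolding nc_monomial_Cons Jideal_def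
    by (intro bounded_mod_mult bounded_mod_var[OF assms, unfolded Jideal_def])
qed

lemma order_bounded_mod_add_star:
  assumes "bounded_mod (nc_ideal G) x"
  shows "order_bounded_mod (nc_ideal G) (x + nc_star x)"
proof -
  obtain N where N: "N \<ge> 0" "sos_mod (nc_ideal G) (nc_const N - nc_mult (nc_star x) x)" and "fsupp x"
    using assms unfolding bounded_mod_def by blast
  have "sos_mod (nc_ideal G) (nc_mult (nc_star (nc_one + x)) (nc_one + x) + (nc_const N - nc_mult (nc_star x) x))"
    using \<open>fsupp x\<close> by (intro sos_mod_add sos_mod_square N) simp
  moreover have "nc_mult (nc_star (nc_one + x)) (nc_one + x) + (nc_const N - nc_mult (nc_star x) x)
      = nc_const (N + 1) + (x + nc_star x)"
    by (simp only: nc_star_add nc_star_one nc_mult_add_left nc_mult_add_right nc_mult_one_left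
       nc_mult_one_right) (rule ext, simp only: plus_fun_apply minus_apply nc_scale_def, simp add: algebra_simps)
  moreover have "sos_mod (nc_ideal G) (nc_mult (nc_star (nc_one - x)) (nc_one - x) + (nc_const N - nc_mult (nc_star x) x))"
    using \<open>fsupp x\<close> by (intro sos_mod_add sos_mod_square N) simp
  moreover have "nc_mult (nc_star (nc_one - x)) (nc_one - x) + (nc_const N - nc_mult (nc_star x) x)
      = nc_const (N + 1) - (x + nc_star x)"
    by (simp only: nc_star_diff nc_star_one nc_mult_diff_left nc_mult_diff_right nc_mult_one_left
       nc_mult_one_right) (rule ext, simp only: plus_fun_apply minus_apply nc_scale_def, simp add: algebra_simps)
  ultimately show ?thesis
    unfolding order_bounded_mod_def using \<open>fsupp x\<close> by (intro conjI exI[of _ "N + 1"]) simp_all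
qed

lemma order_bounded_mod_zero: "order_bounded_mod (nc_ideal G) 0"
  unfolding order_bounded_mod_def using sos_mod_zero by (intro conjI exI[of _ 0]) simp_all

lemma order_bounded_mod_add:
  assumes "order_bounded_mod (nc_ideal G) x" and "order_bounded_mod (nc_ideal G) y"
  shows "order_bounded_mod (nc_ideal G) (x + y)"
proof -
  obtain N where N: "sos_mod (nc_ideal G) (nc_const N + x)" "sos_mod (nc_ideal G) (nc_const N - x)" and "fsupp x"
    using assms(1) unfolding order_bounded_mod_def by blast
  obtain M where M: "sos_mod (nc_ideal G) (nc_const M + y)" "sos_mod (nc_ideal G) (nc_const M - y)" and "fsupp y"
    using assms(2) unfolding order_bounded_mod_def by blast
  have "nc_const (N + M) + (x + y) = (nc_const N + x) + (nc_const M + y)"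
    and "nc_const (N + M) - (x + y) = (nc_const N - x) + (nc_const M - y)"
    by (rule ext, simp add: nc_scale_def algebra_simps)+
  then show ?thesis
    unfolding order_bounded_mod_def using N M \<open>fsupp x\<close> \<open>fsupp y\<close>
    by (intro conjI exI[of _ "N + M"]) (simp_all only: sos_mod_add fsupp_add)
qed

lemma order_bounded_mod_sum:
  assumes "finite A" and "\<And>a. a \<in> A \<Longrightarrow> order_bounded_mod (nc_ideal G) (f a)"
  shows "order_bounded_mod (nc_ideal G) (\<Sum>a\<in>A. f a)"
  using assms by (induction A rule: finite_induct) (simp_all add: order_bounded_mod_zero order_bounded_mod_add)

lemma order_bounded_mod_scale:
  assumes "order_bounded_mod (nc_ideal G) y" and "r \<ge> 0"
  shows "order_bounded_mod (nc_ideal G) (nc_scale (complex_of_real r) y)"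
proof -
  obtain N where N: "sos_mod (nc_ideal G) (nc_const N + y)" "sos_mod (nc_ideal G) (nc_const N - y)" and "fsupp y"
    using assms(1) unfolding order_bounded_mod_def by blast
  have "nc_const (r * N) + nc_scale (complex_of_real r) y = nc_scale (complex_of_real r) (nc_const N + y)"
    and "nc_const (r * N) - nc_scale (complex_of_real r) y = nc_scale (complex_of_real r) (nc_const N - y)"
    by (rule ext, simp add: nc_scale_def algebra_simps)+
  then show ?thesis
    unfolding order_bounded_mod_def using N assms(2) \<open>fsupp y\<close>
    by (intro conjI exI[of _ "r * N"]) (simp_all only: sos_mod_scale fsupp_scale)
qed

lemma order_bounded_mod_add_star_of_fsupp:
  assumes "homogeneous h" and "hyperbolic h e" and "fsupp b"
  shows "order_bounded_mod (Jideal h e) (b + nc_star b)"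
proof -
  define S where "S = {w. b w \<noteq> 0}"
  have "finite S" using assms(3) by (simp add: S_def fsupp_def)
  have "b + nc_star b = (\<Sum>w\<in>S. nc_scale (b w) (nc_monomial w)) + nc_star (\<Sum>w\<in>S. nc_scale (b w) (nc_monomial w))"
    unfolding S_def by (simp only: fsupp_eq_sum_monomials[OF assms(3), symmetric])
  also have "\<dots> = (\<Sum>w\<in>S. nc_scale (b w) (nc_monomial w) + nc_star (nc_scale (b w) (nc_monomial w)))"
    by (simp only: nc_star_sum sum.distrib)
  finally show ?thesis
    unfolding Jideal_def using \<open>finite S\<close>
    by (simp only:) (intro order_bounded_mod_sum order_bounded_mod_add_star bounded_mod_scale
        bounded_mod_monomial[OF assms(1,2), unfolded Jideal_def])
qed

section \<open>\<open>1\<close> is an algebraic interior point\<close>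

lemma sos_mod_one_plus_small_multiple:
  assumes "order_bounded_mod (nc_ideal G) y"
  shows "\<exists>\<epsilon>>0. \<forall>t. \<bar>t\<bar> \<le> \<epsilon> \<longrightarrow> sos_mod (nc_ideal G) (nc_one + nc_scale (complex_of_real t) y)"
proof -
  obtain N where N: "sos_mod (nc_ideal G) (nc_const N + y)" "sos_mod (nc_ideal G) (nc_const N - y)"
    using assms unfolding order_bounded_mod_def by blast
  have "sos_mod (nc_ideal G) (nc_one + nc_scale (complex_of_real t) y)"
    if t: "\<bar>t\<bar> \<le> 1 / (\<bar>N\<bar> + 1)" for t
  proof -
    have "\<bar>t\<bar> * N \<le> \<bar>t\<bar> * \<bar>N\<bar>" by (rule mult_left_mono) simp_all
    also have "\<dots> \<le> \<bar>t\<bar> * (\<bar>N\<bar> + 1)" by (simp add: distrib_left)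
    also have "\<dots> \<le> 1" using t by (simp add: le_divide_eq)
    finally have const: "1 - \<bar>t\<bar> * N \<ge> 0" by simp
    show ?thesis
    proof (cases "t \<ge> 0")
      case True
      have "sos_mod (nc_ideal G) (nc_const (1 - \<bar>t\<bar> * N) + nc_scale (complex_of_real t) (nc_const N + y))"
        using True const by (intro sos_mod_add sos_mod_const sos_mod_scale N)
      moreover have "nc_const (1 - \<bar>t\<bar> * N) + nc_scale (complex_of_real t) (nc_const N + y)
          = nc_one + nc_scale (complex_of_real t) y"
        using True by (intro ext) (simp add: nc_scale_def algebra_simps)
      ultimately show ?thesis by (simp only:)
    next
      case False
      have "sos_mod (nc_ideal G) (nc_const (1 - \<bar>t\<bar> * N) + nc_scale (complex_of_real (- t)) (nc_const N - y))"
        using False const by (intro sos_mod_add sos_mod_const sos_mod_scale N) simp_all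
      moreover have "nc_const (1 - \<bar>t\<bar> * N) + nc_scale (complex_of_real (- t)) (nc_const N - y)
          = nc_one + nc_scale (complex_of_real t) y"
        using False by (intro ext) (simp add: nc_scale_def algebra_simps)
      ultimately show ?thesis by (simp only:)
    qed
  qed
  moreover have "1 / (\<bar>N\<bar> + 1) > 0" by (simp add: add_nonneg_pos)
  ultimately show ?thesis by blast
qed

lemma sos_mod_one_plus_small_hermitian:
  assumes "homogeneous h" and "hyperbolic h e" and "fsupp b" and "hermitian_mod (Jideal h e) b"
  shows "\<exists>\<epsilon>>0. \<forall>t. \<bar>t\<bar> \<le> \<epsilon> \<longrightarrow> sos_mod (Jideal h e) (nc_one + nc_scale (complex_of_real t) b)"
proof -
  define y where "y = nc_scale (complex_of_real (1 / 2)) (b + nc_star b)"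
  have "order_bounded_mod (Jideal h e) y"
    unfolding y_def Jideal_def
    by (rule order_bounded_mod_scale[OF order_bounded_mod_add_star_of_fsupp[OF assms(1-3), unfolded Jideal_def]]) simp
  from sos_mod_one_plus_small_multiple[OF this[unfolded Jideal_def]]
  obtain \<epsilon> where "\<epsilon> > 0"
    and sos: "\<And>t. \<bar>t\<bar> \<le> \<epsilon> \<Longrightarrow> sos_mod (Jideal h e) (nc_one + nc_scale (complex_of_real t) y)"
    unfolding Jideal_def by blast
  have eq: "nc_one + nc_scale (complex_of_real t) b - (nc_one + nc_scale (complex_of_real t) y)
      = nc_scale (complex_of_real (- t / 2)) (nc_star b - b)" for t
    by (intro ext) (simp add: y_def nc_scale_def field_simps)
  have "nc_one + nc_scale (complex_of_real t) b - (nc_one + nc_scale (complex_of_real t) y) \<in> Jideal h e" for t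
    unfolding eq using assms(4) unfolding hermitian_mod_def Jideal_def by (rule nc_ideal_scale)
  with sos have "sos_mod (Jideal h e) (nc_one + nc_scale (complex_of_real t) b)" if "\<bar>t\<bar> \<le> \<epsilon>" for t
    using that unfolding Jideal_def by (blast intro: sos_mod_cong)
  with \<open>\<epsilon> > 0\<close> show ?thesis by blast
qed

theorem lemma2p2:
  fixes h :: "('n::finite) mpoly" and e :: "'n \<Rightarrow> real"
  assumes "homogeneous h" and "hyperbolic h e"
  shows "(\<forall>a. mpoly_eval h a \<noteq> 0 \<longrightarrow> invertible_mod (Jideal h e) (nc_lin a))
       \<and> (\<forall>a\<in>hcone_interior h e. sos_mod (Jideal h e) (nc_lin a))
       \<and> (\<forall>b. fsupp b \<and> hermitian_mod (Jideal h e) b \<longrightarrow>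
            (\<exists>\<epsilon>>0. \<forall>t::real. \<bar>t\<bar> \<le> \<epsilon> \<longrightarrow>
               sos_mod (Jideal h e) (nc_one + nc_scale (complex_of_real t) b)))"
  using invertible_mod_lin sos_mod_lin_of_hcone_interior sos_mod_one_plus_small_hermitian[OF assms]
  by blast

end
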